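(* Let $x_1,x_2>0$ and $\pi\in(0,1)$ be as described in the context, and let $\pi_0=\frac{1-x_1x_2}{x_1+x_2-2x_1x_2}$. Diffusion occurs from a small seed if and only if one of the following holds: (1) $x_1x_2>1$; or (2) $x_1x_2\le1$, $(x_1,x_2)\neq(1,1)$, and $\pi>\pi_0$.
   Context: There are two types $i\in\{1,2\}$, with meeting matrix $\Pi=\begin{pmatrix}\pi&1-\pi\\1-\pi&\pi\end{pmatrix}$, $0<\pi<1$ ($\pi_{ij}$ is the probability a meeting of a type-$i$ agent is with a type-$j$ agent). For each type $i$: $P_i$ is a degree distribution on the nonnegative integers; $w_i(d)>0$ are degree weights for $d$ with $P_i(d)>0$; $f_i(d,a)$ and $g_i(d,a)$ ($0\le a\le d$) are the adoption and abandonment rates of a type-$i$, degree-$d$ agent who meets $a$ adopters, satisfying: $f_i(d,0)=0$; $f_i(d,a)$ nondecreasing in $a$; $f_i(d,1)>0$ for some $d$ with $P_i(d)>0$; $g_i(d,0)>0$; $g_i(d,a)$ nonincreasing in $a$. Let $x_i=\sum_dP_i(d)w_i(d)\,d\,\frac{f_i(d,1)}{g_i(d,0)}$, assumed finite (it is positive), and $$A=\begin{pmatrix}\pi x_1&(1-\pi)x_2\\(1-\pi)x_1&\pi x_2\end{pmatrix}.$$ Diffusion occurs from a small seed means: for every $\varepsilon>0$ there exists $v\in\mathbb{R}^2$ with $0<v_i<\varepsilon$ and $(Av)_i>v_i$ for $i=1,2$. *)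

theory Defs
  imports "HOL-Analysis.Analysis"
begin

text \<open>Index 1 of type 2 is type 1, index 2 is type 2.\<close>

definition A_mat :: "real \<Rightarrow> real \<Rightarrow> real \<Rightarrow> real^2^2" where
  "A_mat p x1 x2 = (\<chi> i j. if i = 1 then (if j = 1 then p * x1 else (1 - p) * x2)
                           else (if j = 1 then (1 - p) * x1 else p * x2))"

definition diffusion_small_seed :: "real \<Rightarrow> real \<Rightarrow> real \<Rightarrow> bool" where
  "diffusion_small_seed p x1 x2 \<longleftrightarrow>
     (\<forall>\<epsilon>>0. \<exists>v :: real^2. (\<forall>i. 0 < v $ i \<and> v $ i < \<epsilon> \<and> (A_mat p x1 x2 *v v) $ i > v $ i))"

end

theory Submission
  imports Defs
begin

text \<open>
  Since \<open>A v > v\<close> is invariant under scaling \<open>v\<close>, diffusion from a small seed amounts to \<open>A\<close>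
  having a positive strict supersolution. For a \<open>2 \<times> 2\<close> matrix with positive off-diagonal
  entries such a vector exists iff some diagonal entry is at least \<open>1\<close> or \<open>det (I - A) < 0\<close>.
  Here \<open>det (I - A) = (1 - x\<^sub>1 x\<^sub>2) - \<pi> (x\<^sub>1 + x\<^sub>2 - 2 x\<^sub>1 x\<^sub>2)\<close>: a single diagonal entry
  \<open>\<pi> x\<^sub>i \<ge> 1\<close> already makes it negative, two of them force \<open>x\<^sub>1 x\<^sub>2 > 1\<close>, and conversely
  \<open>x\<^sub>1 x\<^sub>2 > 1\<close> makes it negative as soon as both diagonal entries are below \<open>1\<close>.
\<close>

lemma small_pos_supersolution_iff:
  fixes M :: "real^'n^'n"
  shows "(\<forall>\<epsilon>>0. \<exists>v. \<forall>i. 0 < v $ i \<and> v $ i < \<epsilon> \<and> v $ i < (M *v v) $ i)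
     \<longleftrightarrow> (\<exists>v. \<forall>i. 0 < v $ i \<and> v $ i < (M *v v) $ i)"
proof
  assume "\<forall>\<epsilon>>0. \<exists>v. \<forall>i. 0 < v $ i \<and> v $ i < \<epsilon> \<and> v $ i < (M *v v) $ i"
  then show "\<exists>v. \<forall>i. 0 < v $ i \<and> v $ i < (M *v v) $ i"
    by (meson zero_less_one)
next
  assume "\<exists>v. \<forall>i. 0 < v $ i \<and> v $ i < (M *v v) $ i"
  then obtain v where v: "\<And>i. 0 < v $ i" "\<And>i. v $ i < (M *v v) $ i"
    by blast
  show "\<forall>\<epsilon>>0. \<exists>v. \<forall>i. 0 < v $ i \<and> v $ i < \<epsilon> \<and> v $ i < (M *v v) $ i"
  proof (intro allI impI)
    fix \<epsilon> :: real
    assume "\<epsilon> > 0"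
    define t where "t = \<epsilon> / (norm v + 1)"
    have t: "t > 0" "t * (norm v + 1) = \<epsilon>"
      using \<open>\<epsilon> > 0\<close> add_nonneg_pos[OF norm_ge_zero[of v] zero_less_one]
      by (simp_all add: t_def)
    have "t * v $ i < \<epsilon>" for i
    proof -
      have "t * v $ i \<le> t * norm v"
        using t(1) component_le_norm_cart[of v i] by (simp add: mult_left_mono)
      also have "\<dots> < \<epsilon>"
        using t by (simp add: distrib_left)
      finally show ?thesis .
    qed
    then show "\<exists>w. \<forall>i. 0 < w $ i \<and> w $ i < \<epsilon> \<and> w $ i < (M *v w) $ i"
      using t(1) v by (intro exI[of _ "t *\<^sub>R v"]) (simp add: matrix_vector_mult_scaleR)
  qed
qed

lemma A_mat_mult_vec:
  "(A_mat p x1 x2 *v v) $ 1 = p * x1 * v $ 1 + (1 - p) * x2 * v $ 2"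
  "(A_mat p x1 x2 *v v) $ 2 = (1 - p) * x1 * v $ 1 + p * x2 * v $ 2"
  by (simp_all add: A_mat_def matrix_vector_mult_def sum_2)

lemma diffusion_small_seed_iff_pos_supersolution:
  "diffusion_small_seed p x1 x2 \<longleftrightarrow>
     (\<exists>u w. 0 < u \<and> 0 < w \<and> u < p * x1 * u + (1 - p) * x2 * w
                          \<and> w < (1 - p) * x1 * u + p * x2 * w)"
proof -
  have "diffusion_small_seed p x1 x2 \<longleftrightarrow>
          (\<exists>v :: real^2. \<forall>i. 0 < v $ i \<and> v $ i < (A_mat p x1 x2 *v v) $ i)"
    using small_pos_supersolution_iff[of "A_mat p x1 x2"]
    by (simp add: diffusion_small_seed_def)
  also have "\<dots> \<longleftrightarrow> (\<exists>u w. 0 < u \<and> 0 < w \<and> u < p * x1 * u + (1 - p) * x2 * w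
                                    \<and> w < (1 - p) * x1 * u + p * x2 * w)"
  proof
    assume "\<exists>v :: real^2. \<forall>i. 0 < v $ i \<and> v $ i < (A_mat p x1 x2 *v v) $ i"
    then show "\<exists>u w. 0 < u \<and> 0 < w \<and> u < p * x1 * u + (1 - p) * x2 * w
                     \<and> w < (1 - p) * x1 * u + p * x2 * w"
      by (metis A_mat_mult_vec)
  next
    assume "\<exists>u w. 0 < u \<and> 0 < w \<and> u < p * x1 * u + (1 - p) * x2 * w
                   \<and> w < (1 - p) * x1 * u + p * x2 * w"
    then obtain u w where "0 < u" "0 < w" "u < p * x1 * u + (1 - p) * x2 * w"
      "w < (1 - p) * x1 * u + p * x2 * w"
      by blast
    then show "\<exists>v :: real^2. \<forall>i. 0 < v $ i \<and> v $ i < (A_mat p x1 x2 *v v) $ i"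
      by (intro exI[of _ "vector [u, w]"]) (simp add: forall_2 A_mat_mult_vec)
  qed
  finally show ?thesis .
qed

lemma pos_supersolution_2x2_iff:
  fixes a b c d :: real
  assumes "0 < b" and "0 < c"
  shows "(\<exists>u w. 0 < u \<and> 0 < w \<and> u < a * u + b * w \<and> w < c * u + d * w)
     \<longleftrightarrow> 1 \<le> a \<or> 1 \<le> d \<or> (1 - a) * (1 - d) < b * c"
proof
  assume "\<exists>u w. 0 < u \<and> 0 < w \<and> u < a * u + b * w \<and> w < c * u + d * w"
  then obtain u w where uw: "0 < u" "0 < w" "(1 - a) * u < b * w" "(1 - d) * w < c * u"
    by (auto simp: algebra_simps)
  show "1 \<le> a \<or> 1 \<le> d \<or> (1 - a) * (1 - d) < b * c"
  proof (rule ccontr)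
    assume "\<not> ?thesis"
    then have "a < 1" "d < 1" "b * c \<le> (1 - a) * (1 - d)"
      by auto
    then have "((1 - a) * u) * ((1 - d) * w) < (b * w) * (c * u)"
      using uw \<open>0 < b\<close> by (intro mult_strict_mono[OF uw(3,4)]) auto
    then have "(1 - a) * (1 - d) * (u * w) < b * c * (u * w)"
      by (simp add: algebra_simps)
    with uw \<open>b * c \<le> (1 - a) * (1 - d)\<close> show False
      by (simp add: mult_less_cancel_right)
  qed
next
  assume H: "1 \<le> a \<or> 1 \<le> d \<or> (1 - a) * (1 - d) < b * c"
  have "\<exists>w. 0 < w \<and> 1 - a < b * w \<and> (1 - d) * w < c"
  proof (cases "1 \<le> d")
    case True
    define w where "w = max 0 ((1 - a) / b) + 1"
    have "0 < w" "(1 - a) / b < w"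
      by (auto simp: w_def)
    then have "1 - a < b * w"
      using \<open>0 < b\<close> by (simp add: pos_divide_less_eq mult.commute)
    moreover have "(1 - d) * w \<le> 0"
      using True \<open>0 < w\<close> by (simp add: mult_nonpos_nonneg)
    ultimately show ?thesis
      using \<open>0 < w\<close> \<open>0 < c\<close> by (intro exI[of _ w]) auto
  next
    case False
    have "(1 - a) * (1 - d) < b * c"
      using H False \<open>0 < b\<close> \<open>0 < c\<close>
      by (smt (verit) mult_nonpos_nonneg mult_pos_pos)
    then have "max 0 ((1 - a) / b) < c / (1 - d)"
      using False \<open>0 < b\<close> \<open>0 < c\<close> by (auto simp: field_simps)
    then obtain w where "max 0 ((1 - a) / b) < w" "w < c / (1 - d)"
      using dense by blast
    then show ?thesis
      using False \<open>0 < b\<close> by (intro exI[of _ w]) (auto simp: field_simps)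
  qed
  then obtain w where "0 < w" "1 - a < b * w" "(1 - d) * w < c"
    by blast
  then show "\<exists>u w. 0 < u \<and> 0 < w \<and> u < a * u + b * w \<and> w < c * u + d * w"
    by (intro exI[of _ 1] exI[of _ w]) (auto simp: algebra_simps)
qed

lemma twice_prod_less_sum:
  fixes x y :: real
  assumes "0 < x" "0 < y" "x * y \<le> 1" "(x, y) \<noteq> (1, 1)"
  shows "2 * x * y < x + y"
proof (cases "x = y")
  case True
  have "\<not> 1 < x"
    using less_1_mult[of x x] assms(3) True by auto
  with True assms(4) have "x < 1"
    by auto
  then show ?thesis
    using True \<open>0 < x\<close> by simp
next
  case False
  have "x * y * (x * y) \<le> x * y"
    using assms by (simp add: mult_left_le)
  moreover have "0 < (x - y)\<^sup>2"
    using False by simp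
  ultimately have "(2 * x * y)\<^sup>2 < (x + y)\<^sup>2"
    by (simp add: power2_eq_square algebra_simps)
  then show ?thesis
    using assms by (simp add: power_less_imp_less_base)
qed

lemma A_mat_supersolution_condition_iff:
  fixes x1 x2 p :: real
  assumes "0 < x1" "0 < x2" "0 < p" "p < 1"
  shows "1 \<le> p * x1 \<or> 1 \<le> p * x2 \<or> (1 - p * x1) * (1 - p * x2) < (1 - p) * x2 * ((1 - p) * x1)
     \<longleftrightarrow> 1 < x1 * x2 \<or> (1 - p * x1) * (1 - p * x2) < (1 - p) * x2 * ((1 - p) * x1)"
    (is "?L \<longleftrightarrow> ?R")
proof -
  have off_diag: "0 < (1 - p) * x2 * ((1 - p) * x1)"
    using assms by simp
  have "?R" if "1 \<le> p * x1" and "1 \<le> p * x2"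
  proof -
    have "1 \<le> (p * x1) * (p * x2)"
      using that by (metis mult_mono' zero_le_one mult_1)
    also have "\<dots> = (p * p) * (x1 * x2)"
      by (simp add: algebra_simps)
    also have "\<dots> < x1 * x2"
      using assms mult_strict_mono[of p 1 p 1] by simp
    finally show ?R by simp
  qed
  moreover have "?R" if "(1 \<le> p * x1) \<noteq> (1 \<le> p * x2)"
  proof -
    have "(1 - p * x1) * (1 - p * x2) \<le> 0"
      using that by (auto simp: mult_nonpos_nonneg mult_nonneg_nonpos)
    with off_diag show ?R by linarith
  qed
  moreover have "?L" if "1 < x1 * x2" "p * x1 < 1" "p * x2 < 1"
  proof (cases "1 < x1 \<and> 1 < x2")
    case True
    have "1 - p * x1 < (1 - p) * x1" "1 - p * x2 < (1 - p) * x2"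
      using True by (simp_all add: algebra_simps)
    then have "(1 - p * x1) * (1 - p * x2) < (1 - p) * x1 * ((1 - p) * x2)"
      using that by (intro mult_strict_mono) auto
    then show ?L by (simp add: mult.commute)
  next
    case False
    have "\<not> (x1 \<le> 1 \<and> x2 \<le> 1)"
      using that(1) assms(1,2) mult_le_one[of x1 x2] by auto
    with False consider "x1 \<le> 1" "1 < x2" | "1 < x1" "x2 \<le> 1"
      by linarith
    then have "(1 - x1) * (1 - x2) \<le> 0"
      by cases (simp_all add: mult_nonneg_nonpos mult_nonpos_nonneg)
    moreover have "(1 - p * x1) * (1 - p * x2) - (1 - p) * x2 * ((1 - p) * x1)
        = (1 - p) * (1 - x1 * x2) + p * ((1 - x1) * (1 - x2))"
      by (simp add: algebra_simps)
    moreover have "(1 - p) * (1 - x1 * x2) < 0"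
      using that assms by (simp add: mult_pos_neg)
    moreover have "p * ((1 - x1) * (1 - x2)) \<le> 0"
      using calculation(1) assms by (simp add: mult_nonneg_nonpos)
    ultimately show ?L by linarith
  qed
  ultimately show ?thesis
    by linarith
qed

lemma A_mat_det_neg_iff_threshold:
  fixes x1 x2 p :: real
  assumes "0 < x1" "0 < x2" "x1 * x2 \<le> 1"
  shows "(1 - p * x1) * (1 - p * x2) < (1 - p) * x2 * ((1 - p) * x1)
     \<longleftrightarrow> (x1, x2) \<noteq> (1, 1) \<and> (1 - x1 * x2) / (x1 + x2 - 2 * x1 * x2) < p"
proof -
  have "(1 - p * x1) * (1 - p * x2) - (1 - p) * x2 * ((1 - p) * x1)
      = (1 - x1 * x2) - p * (x1 + x2 - 2 * x1 * x2)"
    by (simp add: algebra_simps)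
  then have "(1 - p * x1) * (1 - p * x2) < (1 - p) * x2 * ((1 - p) * x1)
      \<longleftrightarrow> 1 - x1 * x2 < p * (x1 + x2 - 2 * x1 * x2)"
    by linarith
  moreover have "0 < x1 + x2 - 2 * x1 * x2" if "(x1, x2) \<noteq> (1, 1)"
    using twice_prod_less_sum[OF assms that] by simp
  ultimately show ?thesis
    by (cases "(x1, x2) = (1, 1)") (auto simp: pos_divide_less_eq mult.commute)
qed

theorem theorem2:
  fixes x1 x2 p :: real
  assumes "0 < x1" and "0 < x2" and "0 < p" and "p < 1"
  shows "diffusion_small_seed p x1 x2 \<longleftrightarrow>
           (x1 * x2 > 1 \<or>
            (x1 * x2 \<le> 1 \<and> (x1, x2) \<noteq> (1, 1) \<and>
             p > (1 - x1 * x2) / (x1 + x2 - 2 * x1 * x2)))"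
proof -
  have "diffusion_small_seed p x1 x2 \<longleftrightarrow>
          1 \<le> p * x1 \<or> 1 \<le> p * x2 \<or> (1 - p * x1) * (1 - p * x2) < (1 - p) * x2 * ((1 - p) * x1)"
    using diffusion_small_seed_iff_pos_supersolution[of p x1 x2] assms
      pos_supersolution_2x2_iff[of "(1 - p) * x2" "(1 - p) * x1" "p * x1" "p * x2"]
    by simp
  also have "\<dots> \<longleftrightarrow> 1 < x1 * x2 \<or> (1 - p * x1) * (1 - p * x2) < (1 - p) * x2 * ((1 - p) * x1)"
    by (rule A_mat_supersolution_condition_iff[OF assms])
  also have "\<dots> \<longleftrightarrow> x1 * x2 > 1 \<or>
      (x1 * x2 \<le> 1 \<and> (x1, x2) \<noteq> (1, 1) \<and> p > (1 - x1 * x2) / (x1 + x2 - 2 * x1 * x2))"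
    using A_mat_det_neg_iff_threshold[OF assms(1,2)] by (meson not_le)
  finally show ?thesis .
qed

end
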